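(* The Dedekind reals ${\mathbf{R}_\mathbf{D}}$, with the premetric $x\sim_\varepsilon y:=|x-y|<\varepsilon$ and the maps $\mathsf{rat}:\mathbf{Q}\to{\mathbf{R}_\mathbf{D}}$ and $\lim:\mathcal{C}_{{\mathbf{R}_\mathbf{D}}}\to{\mathbf{R}_\mathbf{D}}$ defined below, can be completed to a Cauchy structure; that is, there is $\mathsf{eq}:\prod_{u,v:{\mathbf{R}_\mathbf{D}}}(\forall(\varepsilon:\mathbf{Q}_+).u\sim_\varepsilon v)\to u=v$, and the following hold: (i) for $q,r:\mathbf{Q}$, $\varepsilon:\mathbf{Q}_+$, if $-\varepsilon<q-r<\varepsilon$ then $\mathsf{rat}(q)\sim_\varepsilon\mathsf{rat}(r)$; (ii) for $q:\mathbf{Q}$, $y:\mathcal{C}_{{\mathbf{R}_\mathbf{D}}}$, $\varepsilon,\delta:\mathbf{Q}_+$, if $\mathsf{rat}(q)\sim_\varepsilon y_\delta$ then $\mathsf{rat}(q)\sim_{\varepsilon+\delta}\lim(y)$; (iii) for $x:\mathcal{C}_{{\mathbf{R}_\mathbf{D}}}$, $r:\mathbf{Q}$, $\varepsilon,\delta:\mathbf{Q}_+$, if $x_\delta\sim_\varepsilon\mathsf{rat}(r)$ then $\lim(x)\sim_{\varepsilon+\delta}\mathsf{rat}(r)$; (iv) for $x,y:\mathcal{C}_{{\mathbf{R}_\mathbf{D}}}$, $\varepsilon,\delta,\eta:\mathbf{Q}_+$, if $x_\delta\sim_\varepsilon y_\eta$ then $\lim(x)\sim_{\varepsilon+\delt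a+\eta}\lim(y)$.
   Context: Work in univalent type theory with propositional truncation and function extensionality; $\Omega$ is the type of propositions, $\exists$ and $\vee$ are truncated. $\mathbf{Q}$ is the rationals, $\mathbf{Q}_+$ the positive rationals. For predicates $L,U:\mathbf{Q}\to\Omega$ and $x=(L,U)$ write $q<x$ for $L(q)$ and $x<r$ for $U(r)$. $x$ is a Dedekind cut if: (inhabited) $\exists q.\,q<x$ and $\exists r.\,x<r$; (rounded) $q<x\Leftrightarrow\exists q'.(q<q')\wedge(q'<x)$ and $x<r\Leftrightarrow\exists r'.(r'<r)\wedge(x<r')$; (transitive) $(q<x)\wedge(x<r)\Rightarrow q<r$; (located) $q<r\Rightarrow(q<x)\vee(x<r)$. ${\mathbf{R}_\mathbf{D}}$ is the type of Dedekind cuts. Define: $q<\mathsf{rat}(r):=q<r$, $\mathsf{rat}(q)<r:=q<r$; $q<x+y:=\exists s,t.(q=s+t)\wedge(s<x)\wedge(t<y)$, $x+y<r:=\exists s,t.(r=s+t)\wedge(x<s)\wedge(y<t)$; $q<-x:=x<-q$, $-x<r:=-r<x$; $x-y:=x+(-y)$; $x<y:=\exists q.(x<q)\wedge(q<y)$; $q<|x|:=(q<x)\vee(q<-x)$, $|x|<r:=(x<r)\wedge(-x<r)$; and $|x-y|<\varepsilon$ means $|x-y|<\mathsf{rat}(\varepsilon)$, i.e. $\varepsilon$ is in the upper cut of $|x-y|$. A Cauchy approximation in ${\mathbf{R}_\mathbf{D}}$ is $x:\mathbf{Q}_+\to{\mathbf{R}_\mathbf{D}}$ with $\forall\delta,\varepsilon.\,x_\delta\sim_{\delta+\varepsilon}x_\varepsilon$;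 $\mathcal{C}_{{\mathbf{R}_\mathbf{D}}}$ is their type. For $x:\mathcal{C}_{{\mathbf{R}_\mathbf{D}}}$, $\lim(x)$ is the Dedekind cut with $q<\lim(x):=\exists(\varepsilon,\theta:\mathbf{Q}_+).\,q+\varepsilon+\theta<x_\varepsilon$ and $\lim(x)<r:=\exists(\varepsilon,\theta:\mathbf{Q}_+).\,x_\varepsilon<r-\varepsilon-\theta$ (here $q<x_\varepsilon$, $x_\varepsilon<r$ refer to the cut of $x_\varepsilon$). *)

theory Defs
  imports Complex_Main
begin

text \<open>A pre-cut is a pair (L, U) of predicates on the rationals;
  q < x means L q, x < r means U r.\<close>
type_synonym cut = "(rat \<Rightarrow> bool) \<times> (rat \<Rightarrow> bool)"

definition lowerD :: "cut \<Rightarrow> rat \<Rightarrow> bool" where "lowerD x q = fst x q"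
definition upperD :: "cut \<Rightarrow> rat \<Rightarrow> bool" where "upperD x r = snd x r"

definition is_cut :: "cut \<Rightarrow> bool" where
  "is_cut x \<longleftrightarrow>
     (\<exists>q. lowerD x q) \<and> (\<exists>r. upperD x r) \<and>
     (\<forall>q. lowerD x q \<longleftrightarrow> (\<exists>q'. q < q' \<and> lowerD x q')) \<and>
     (\<forall>r. upperD x r \<longleftrightarrow> (\<exists>r'. r' < r \<and> upperD x r')) \<and>
     (\<forall>q r. lowerD x q \<and> upperD x r \<longrightarrow> q < r) \<and>
     (\<forall>q r. q < r \<longrightarrow> lowerD x q \<or> upperD x r)"

definition ratD :: "rat \<Rightarrow> cut" where
  "ratD s = ((\<lambda>q. q < s), (\<lambda>r. s < r))"

definition addD :: "cut \<Rightarrow> cut \<Rightarrow> cut" where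
  "addD x y = ((\<lambda>q. \<exists>s t. q = s + t \<and> lowerD x s \<and> lowerD y t),
               (\<lambda>r. \<exists>s t. r = s + t \<and> upperD x s \<and> upperD y t))"

definition negD :: "cut \<Rightarrow> cut" where
  "negD x = ((\<lambda>q. upperD x (- q)), (\<lambda>r. lowerD x (- r)))"

definition absD :: "cut \<Rightarrow> cut" where
  "absD x = ((\<lambda>q. lowerD x q \<or> lowerD (negD x) q),
             (\<lambda>r. upperD x r \<and> upperD (negD x) r))"

text \<open>Premetric: x ~_eps y iff |x - y| < rat eps, i.e. eps lies in the upper cut of |x - y|.\<close>
definition closeD :: "rat \<Rightarrow> cut \<Rightarrow> cut \<Rightarrow> bool" where
  "closeD eps x y \<longleftrightarrow> upperD (absD (addD x (negD y))) eps"

text \<open>Cauchy approximations: x : Q_+ -> R_D (values at non-positive arguments are irrelevant).\<close>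
definition cauchy_approx :: "(rat \<Rightarrow> cut) \<Rightarrow> bool" where
  "cauchy_approx x \<longleftrightarrow> (\<forall>d>0. is_cut (x d)) \<and>
     (\<forall>d>0. \<forall>e>0. closeD (d + e) (x d) (x e))"

definition limD :: "(rat \<Rightarrow> cut) \<Rightarrow> cut" where
  "limD x = ((\<lambda>q. \<exists>e>0. \<exists>th>0. lowerD (x e) (q + e + th)),
             (\<lambda>r. \<exists>e>0. \<exists>th>0. upperD (x e) (r - e - th)))"

end

theory Submission
  imports Defs
begin

text \<open>Closeness \<open>|x - y| < \<epsilon>\<close> of two cuts splits into the one-sided bounds \<open>x - y < \<epsilon>\<close> and
  \<open>y - x < \<epsilon>\<close>, each witnessed by an upper bound of one cut and a lower bound of the other
  lying within \<open>\<epsilon>\<close>. Replacing \<open>x\<^sub>\<delta>\<close> by \<open>lim x\<close> moves such a witness by \<open>\<delta>\<close> plus an arbitrarily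
  small slack \<open>\<theta>\<close>, which yields the three limit clauses, the one for two limits by moving
  first on the left and then on the right.\<close>

lemma lowerD_ratD [simp]: "lowerD (ratD s) q \<longleftrightarrow> q < s"
  by (simp add: ratD_def lowerD_def)

lemma upperD_ratD [simp]: "upperD (ratD s) r \<longleftrightarrow> s < r"
  by (simp add: ratD_def upperD_def)

lemma lowerD_limD: "lowerD (limD x) q \<longleftrightarrow> (\<exists>e>0. \<exists>th>0. lowerD (x e) (q + e + th))"
  by (simp add: limD_def lowerD_def)

lemma upperD_limD: "upperD (limD x) r \<longleftrightarrow> (\<exists>e>0. \<exists>th>0. upperD (x e) (r - e - th))"
  by (simp add: limD_def upperD_def)

lemma lowerD_limD_intro: "lowerD (x d) b \<Longrightarrow> d > 0 \<Longrightarrow> th > 0 \<Longrightarrow> lowerD (limD x) (b - d - th)"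
  unfolding lowerD_limD by (intro exI[of _ d] conjI exI[of _ th]) auto

lemma upperD_limD_intro: "upperD (x d) a \<Longrightarrow> d > 0 \<Longrightarrow> th > 0 \<Longrightarrow> upperD (limD x) (a + d + th)"
  unfolding upperD_limD by (intro exI[of _ d] conjI exI[of _ th]) auto

lemma is_cut_ratD: "is_cut (ratD q)"
  unfolding is_cut_def lowerD_ratD upperD_ratD
  by (auto intro: lt_ex gt_ex dest: dense)

context
  fixes x :: cut
  assumes x: "is_cut x"
begin

lemma lowerD_down: "lowerD x q' \<Longrightarrow> q < q' \<Longrightarrow> lowerD x q"
  using x unfolding is_cut_def by blast

lemma lowerD_up: "lowerD x q \<Longrightarrow> \<exists>q'>q. lowerD x q'"
  using x unfolding is_cut_def by blast

lemma upperD_up: "upperD x r \<Longrightarrow> r < r' \<Longrightarrow> upperD x r'"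
  using x unfolding is_cut_def by blast

lemma upperD_down: "upperD x r \<Longrightarrow> \<exists>r'<r. upperD x r'"
  using x unfolding is_cut_def by blast

lemma lowerD_less_upperD: "lowerD x q \<Longrightarrow> upperD x r \<Longrightarrow> q < r"
  using x unfolding is_cut_def by blast

lemma lowerD_or_upperD: "q < r \<Longrightarrow> lowerD x q \<or> upperD x r"
  using x unfolding is_cut_def by blast

lemma lowerD_exists: "\<exists>q. lowerD x q"
  using x unfolding is_cut_def by blast

lemma upperD_exists: "\<exists>r. upperD x r"
  using x unfolding is_cut_def by blast

end

definition diff_lessD :: "rat \<Rightarrow> cut \<Rightarrow> cut \<Rightarrow> bool" where
  "diff_lessD e x y \<longleftrightarrow> (\<exists>a b. upperD x a \<and> lowerD y b \<and> a - b < e)"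

lemma closeD_unfold: "closeD e x y \<longleftrightarrow>
    (\<exists>s t. e = s + t \<and> upperD x s \<and> lowerD y (- t)) \<and>
    (\<exists>s t. - e = s + t \<and> lowerD x s \<and> upperD y (- t))"
  by (simp add: closeD_def absD_def addD_def negD_def upperD_def lowerD_def)

lemma closeD_iff_diff_lessD:
  assumes x: "is_cut x"
  shows "closeD e x y \<longleftrightarrow> diff_lessD e x y \<and> diff_lessD e y x"
proof
  assume "closeD e x y"
  then obtain s t s' t' where "e = s + t" "upperD x s" "lowerD y (- t)"
    and "- e = s' + t'" "lowerD x s'" "upperD y (- t')"
    unfolding closeD_unfold by blast
  moreover obtain a where "a < s" "upperD x a" using upperD_down[OF x \<open>upperD x s\<close>] by blast
  moreover obtain b where "b > s'" "lowerD x b" using lowerD_up[OF x \<open>lowerD x s'\<close>] by blast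
  ultimately have "a - (- t) < e" "(- t') - b < e" by linarith+
  then show "diff_lessD e x y \<and> diff_lessD e y x"
    unfolding diff_lessD_def using \<open>upperD x a\<close> \<open>lowerD y (- t)\<close> \<open>upperD y (- t')\<close> \<open>lowerD x b\<close>
    by blast
next
  assume "diff_lessD e x y \<and> diff_lessD e y x"
  then obtain a b a' b' where "upperD x a" "lowerD y b" "a - b < e"
    and "upperD y a'" "lowerD x b'" "a' - b' < e"
    unfolding diff_lessD_def by blast
  moreover have "upperD x (b + e)" using upperD_up[OF x \<open>upperD x a\<close>] \<open>a - b < e\<close> by simp
  moreover have "lowerD x (a' - e)" using lowerD_down[OF x \<open>lowerD x b'\<close>] \<open>a' - b' < e\<close> by simp
  moreover have "e = (b + e) + - b" "- e = (a' - e) + - a'" by simp_all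
  ultimately show "closeD e x y"
    unfolding closeD_unfold by (metis minus_minus)
qed

lemma diff_lessD_ratD: "diff_lessD e (ratD q) (ratD r) \<longleftrightarrow> q - r < e"
proof
  assume "q - r < e"
  define g where "g = (e - (q - r)) / 3"
  have "q < q + g" "r - g < r" "(q + g) - (r - g) < e"
    using \<open>q - r < e\<close> by (simp_all add: g_def field_simps)
  then show "diff_lessD e (ratD q) (ratD r)"
    unfolding diff_lessD_def lowerD_ratD upperD_ratD by blast
qed (auto simp: diff_lessD_def)

lemma diff_lessD_lowerD_upperD:
  assumes "is_cut x" "is_cut y" "diff_lessD e x y" "lowerD x q" "upperD y r"
  shows "q - r < e"
proof -
  obtain a b where "upperD x a" "lowerD y b" "a - b < e"
    using assms(3) unfolding diff_lessD_def by blast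
  moreover have "q < a" using lowerD_less_upperD[OF assms(1,4)] \<open>upperD x a\<close> .
  moreover have "b < r" using lowerD_less_upperD[OF assms(2)] \<open>lowerD y b\<close> assms(5) .
  ultimately show ?thesis by linarith
qed

lemma diff_lessD_limD_left:
  assumes "diff_lessD e (x d) y" "d > 0"
  shows "diff_lessD (e + d) (limD x) y"
proof -
  obtain a b where ab: "upperD (x d) a" "lowerD y b" "a - b < e"
    using assms(1) unfolding diff_lessD_def by blast
  define th where "th = (e - (a - b)) / 2"
  have "th > 0" "(a + d + th) - b < e + d" using ab(3) by (simp_all add: th_def field_simps)
  then show ?thesis
    unfolding diff_lessD_def using upperD_limD_intro[of x d a, OF ab(1) \<open>d > 0\<close>] ab(2) by blast
qed

lemma diff_lessD_limD_right:
  assumes "diff_lessD e x (y d)" "d > 0"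
  shows "diff_lessD (e + d) x (limD y)"
proof -
  obtain a b where ab: "upperD x a" "lowerD (y d) b" "a - b < e"
    using assms(1) unfolding diff_lessD_def by blast
  define th where "th = (e - (a - b)) / 2"
  have "th > 0" "a - (b - d - th) < e + d" using ab(3) by (simp_all add: th_def field_simps)
  then show ?thesis
    unfolding diff_lessD_def using lowerD_limD_intro[of y d b, OF ab(2) \<open>d > 0\<close>] ab(1) by blast
qed

lemma closeD_ratD: "closeD e (ratD q) (ratD r) \<longleftrightarrow> - e < q - r \<and> q - r < e"
  by (auto simp: closeD_iff_diff_lessD[OF is_cut_ratD] diff_lessD_ratD)

lemma closeD_limD_left:
  assumes "is_cut (x d)" "is_cut (limD x)" "closeD e (x d) y" "d > 0"
  shows "closeD (e + d) (limD x) y"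
  using assms diff_lessD_limD_left diff_lessD_limD_right
  by (simp add: closeD_iff_diff_lessD)

lemma closeD_limD_right:
  assumes "is_cut x" "closeD e x (y d)" "d > 0"
  shows "closeD (e + d) x (limD y)"
  using assms diff_lessD_limD_left diff_lessD_limD_right
  by (simp add: closeD_iff_diff_lessD)

lemma diff_lessD_all_imp:
  assumes u: "is_cut u" and v: "is_cut v" and small: "\<forall>e>0. diff_lessD e u v"
  shows "lowerD u q \<Longrightarrow> lowerD v q" and "upperD v r \<Longrightarrow> upperD u r"
proof -
  assume "lowerD u q"
  then obtain q' where "q < q'" "lowerD u q'" using lowerD_up[OF u] by blast
  then obtain a b where "upperD u a" "lowerD v b" "a - b < q' - q"
    using small unfolding diff_lessD_def by (meson diff_gt_0_iff_gt)
  moreover have "q' < a" using lowerD_less_upperD[OF u \<open>lowerD u q'\<close> \<open>upperD u a\<close>] .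
  ultimately show "lowerD v q" using lowerD_down[OF v] by fastforce
next
  assume "upperD v r"
  then obtain r' where "r' < r" "upperD v r'" using upperD_down[OF v] by blast
  then obtain a b where "upperD u a" "lowerD v b" "a - b < r - r'"
    using small unfolding diff_lessD_def by (meson diff_gt_0_iff_gt)
  moreover have "b < r'" using lowerD_less_upperD[OF v \<open>lowerD v b\<close> \<open>upperD v r'\<close>] .
  ultimately show "upperD u r" using upperD_up[OF u] by fastforce
qed

lemma closeD_all_imp_eq:
  assumes u: "is_cut u" and v: "is_cut v" and close: "\<forall>e>0. closeD e u v"
  shows "u = v"
proof -
  have "\<forall>e>0. diff_lessD e u v" "\<forall>e>0. diff_lessD e v u"
    using close by (simp_all add: closeD_iff_diff_lessD[OF u] closeD_iff_diff_lessD[OF v])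
  then have "lowerD u = lowerD v" "upperD u = upperD v"
    using diff_lessD_all_imp[OF u v] diff_lessD_all_imp[OF v u] by blast+
  then show ?thesis by (simp add: fun_eq_iff lowerD_def upperD_def prod_eq_iff)
qed

lemma lowerD_limD_rounded: "lowerD (limD x) q \<longleftrightarrow> (\<exists>q'>q. lowerD (limD x) q')"
proof
  assume "lowerD (limD x) q"
  then obtain e th where "e > 0" "th > 0" "lowerD (x e) (q + e + th)"
    unfolding lowerD_limD by blast
  then have "lowerD (limD x) (q + th / 2)"
    using lowerD_limD_intro[of x e "q + e + th" "th / 2"] by (simp add: field_simps)
  then show "\<exists>q'>q. lowerD (limD x) q'"
    using \<open>th > 0\<close> by (intro exI[of _ "q + th / 2"]) simp
next
  assume "\<exists>q'>q. lowerD (limD x) q'"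
  then obtain q' e th where "q < q'" "e > 0" "th > 0" "lowerD (x e) (q + e + (th + (q' - q)))"
    unfolding lowerD_limD by (auto simp: algebra_simps)
  then show "lowerD (limD x) q"
    unfolding lowerD_limD by (meson add_pos_pos diff_gt_0_iff_gt)
qed

lemma upperD_limD_rounded: "upperD (limD x) r \<longleftrightarrow> (\<exists>r'<r. upperD (limD x) r')"
proof
  assume "upperD (limD x) r"
  then obtain e th where "e > 0" "th > 0" "upperD (x e) (r - e - th)"
    unfolding upperD_limD by blast
  then have "upperD (limD x) (r - th / 2)"
    using upperD_limD_intro[of x e "r - e - th" "th / 2"] by (simp add: field_simps)
  then show "\<exists>r'<r. upperD (limD x) r'"
    using \<open>th > 0\<close> by (intro exI[of _ "r - th / 2"]) simp
next
  assume "\<exists>r'<r. upperD (limD x) r'"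
  then obtain r' e th where "r' < r" "e > 0" "th > 0" "upperD (x e) (r - e - (th + (r - r')))"
    unfolding upperD_limD by (auto simp: algebra_simps)
  then show "upperD (limD x) r"
    unfolding upperD_limD by (meson add_pos_pos diff_gt_0_iff_gt)
qed

context
  fixes x :: "rat \<Rightarrow> cut"
  assumes x: "cauchy_approx x"
begin

lemma cauchy_approx_is_cut: "d > 0 \<Longrightarrow> is_cut (x d)"
  using x unfolding cauchy_approx_def by blast

lemma limD_lower_less_upper:
  assumes "lowerD (limD x) q" "upperD (limD x) r"
  shows "q < r"
proof -
  obtain e th where e: "e > 0" "th > 0" "lowerD (x e) (q + e + th)"
    using assms(1) unfolding lowerD_limD by blast
  obtain d th' where d: "d > 0" "th' > 0" "upperD (x d) (r - d - th')"
    using assms(2) unfolding upperD_limD by blast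
  have "diff_lessD (e + d) (x e) (x d)"
    using x e(1) d(1) unfolding cauchy_approx_def
    by (simp add: closeD_iff_diff_lessD cauchy_approx_is_cut)
  then have "(q + e + th) - (r - d - th') < e + d"
    using diff_lessD_lowerD_upperD cauchy_approx_is_cut e d by blast
  then show ?thesis using e(2) d(2) by linarith
qed

lemma limD_located:
  assumes "q < r"
  shows "lowerD (limD x) q \<or> upperD (limD x) r"
proof -
  define e where "e = (r - q) / 5"
  have "e > 0" "q + e + e < r - e - e" using assms by (simp_all add: e_def field_simps)
  then have "lowerD (x e) (q + e + e) \<or> upperD (x e) (r - e - e)"
    using lowerD_or_upperD cauchy_approx_is_cut by blast
  then show ?thesis unfolding lowerD_limD upperD_limD using \<open>e > 0\<close> by blast
qed

lemma is_cut_limD: "is_cut (limD x)"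
proof -
  have "is_cut (x 1)" by (simp add: cauchy_approx_is_cut)
  then obtain q r where "lowerD (x 1) q" "upperD (x 1) r"
    using lowerD_exists upperD_exists by blast
  then have "lowerD (limD x) (q - 1 - 1)" "upperD (limD x) (r + 1 + 1)"
    using lowerD_limD_intro upperD_limD_intro by (metis zero_less_one)+
  show ?thesis
    unfolding is_cut_def
  proof (intro conjI allI impI)
    show "\<exists>q. lowerD (limD x) q" "\<exists>r. upperD (limD x) r"
      using \<open>lowerD (limD x) (q - 1 - 1)\<close> \<open>upperD (limD x) (r + 1 + 1)\<close> by blast+
  next
    fix a b :: rat
    show "lowerD (limD x) a \<longleftrightarrow> (\<exists>a'. a < a' \<and> lowerD (limD x) a')"
      by (rule lowerD_limD_rounded)
    show "upperD (limD x) b \<longleftrightarrow> (\<exists>b'. b' < b \<and> upperD (limD x) b')"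
      by (rule upperD_limD_rounded)
    show "lowerD (limD x) a \<and> upperD (limD x) b \<Longrightarrow> a < b"
      using limD_lower_less_upper by blast
    show "a < b \<Longrightarrow> lowerD (limD x) a \<or> upperD (limD x) b"
      by (rule limD_located)
  qed
qed

end

theorem theorem2p23:
  shows "(\<forall>q. is_cut (ratD q))
    \<and> (\<forall>x. cauchy_approx x \<longrightarrow> is_cut (limD x))
    \<and> (\<forall>u v. is_cut u \<longrightarrow> is_cut v \<longrightarrow> (\<forall>e>0. closeD e u v) \<longrightarrow> u = v)
    \<and> (\<forall>q r e. e > 0 \<longrightarrow> - e < q - r \<longrightarrow> q - r < e \<longrightarrow> closeD e (ratD q) (ratD r))
    \<and> (\<forall>q y e d. cauchy_approx y \<longrightarrow> e > 0 \<longrightarrow> d > 0 \<longrightarrow>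
          closeD e (ratD q) (y d) \<longrightarrow> closeD (e + d) (ratD q) (limD y))
    \<and> (\<forall>x r e d. cauchy_approx x \<longrightarrow> e > 0 \<longrightarrow> d > 0 \<longrightarrow>
          closeD e (x d) (ratD r) \<longrightarrow> closeD (e + d) (limD x) (ratD r))
    \<and> (\<forall>x y e d n. cauchy_approx x \<longrightarrow> cauchy_approx y \<longrightarrow> e > 0 \<longrightarrow> d > 0 \<longrightarrow> n > 0 \<longrightarrow>
          closeD e (x d) (y n) \<longrightarrow> closeD (e + d + n) (limD x) (limD y))"
proof (intro conjI allI impI)
  fix u v :: cut
  assume "is_cut u" "is_cut v" "\<forall>e>0. closeD e u v"
  then show "u = v" by (rule closeD_all_imp_eq)
next
  fix q e d :: rat and y :: "rat \<Rightarrow> cut"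
  assume "d > 0" "closeD e (ratD q) (y d)"
  then show "closeD (e + d) (ratD q) (limD y)"
    by (intro closeD_limD_right is_cut_ratD)
next
  fix x :: "rat \<Rightarrow> cut" and r e d :: rat
  assume "cauchy_approx x" "d > 0" "closeD e (x d) (ratD r)"
  then show "closeD (e + d) (limD x) (ratD r)"
    by (intro closeD_limD_left is_cut_ratD is_cut_limD cauchy_approx_is_cut)
next
  fix x y :: "rat \<Rightarrow> cut" and e d n :: rat
  assume x: "cauchy_approx x" and "d > 0" "n > 0"
    and "closeD e (x d) (y n)"
  then have "closeD (e + d) (limD x) (y n)"
    by (intro closeD_limD_left is_cut_limD cauchy_approx_is_cut)
  with x \<open>n > 0\<close> show "closeD (e + d + n) (limD x) (limD y)"
    by (intro closeD_limD_right is_cut_limD)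
qed (simp_all add: is_cut_ratD is_cut_limD closeD_ratD)

end
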